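(* Let $k$ be a field of characteristic $0$, $L/k$ a field extension, $S\in\mathbf{Fam}_L$ with data $a,b,t_0\in L$, and $\{\mathcal{T}_\gamma\}$ the family of trisections described in the context. Let $R=(x_R,y_R,t_R)\in\mathcal{E}$ with $t_R\neq t_0$, and let $\mathcal{T}_R$ be the unique member of the family containing $R$. Then there are at most two points $P\in\mathcal{T}_R$ with $P\neq R$ and with the same $t$-coordinate as $R$.
   Context: $S$ is a del Pezzo surface of degree one in $\mathbb{P}(2,3,1,1)$ given by $Y^2=X^3+F(Z,W)X+G(Z,W)$, $F,G\in k[Z,W]$ homogeneous of degrees $4,6$; $f(t)=F(t,1)$, $g(t)=G(t,1)$; $\mathcal{E}:y^2=x^3+f(t)x+g(t)$ is the rational elliptic surface obtained by blowing up the base point of $|-K_S|$. $S\in\mathbf{Fam}_L$ means there exist $a,b,t_0\in L$ with $t_0\neq0$, $at_0+b\neq0$, $f(t_0)\neq-(at_0+b)^4/3$, such that $t_0$ is a double root of $P(t)=-f(t)^2/4+(at+b)^4f(t)/6+(at+b)^2g(t)+(at+b)^8/108$. Let $Q=((at_0+b)^2/3,\ (at_0+b)^3/6+f(t_0)/(2(at_0+b)),\ t_0)$. For a parameter $\gamma$, $\mathcal{T}_\gamma\subset\mathcal{E}$ is the curve $y=axt+bx+c(\gamma)t^3+d(\gamma)t^2+e(\gamma)t+\gamma$, where $c(\gamma),d(\gamma),e(\gamma)$ are the coefficients, uniquely determined by $\gamma$, for which $\mathcal{T}_\gamma$ has a triple point at $Q$; for $t_R\neq t_0$ there is a unique $\gamma$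 with $R\in\mathcal{T}_\gamma$. *)

theory Defs
  imports "HOL-Computational_Algebra.Polynomial"
begin

text \<open>A subfield k of the ambient field L (the type 'a).\<close>
definition is_subfield :: "'a::field set \<Rightarrow> bool" where
  "is_subfield k \<longleftrightarrow> 0 \<in> k \<and> 1 \<in> k \<and>
     (\<forall>x\<in>k. \<forall>y\<in>k. x + y \<in> k \<and> x * y \<in> k) \<and>
     (\<forall>x\<in>k. - x \<in> k \<and> inverse x \<in> k)"

text \<open>Homogenisation of degree n: F(Z,W) = W^n p(Z/W), and its partial derivatives.\<close>
definition hom_eval :: "nat \<Rightarrow> 'a::field poly \<Rightarrow> 'a \<Rightarrow> 'a \<Rightarrow> 'a" where
  "hom_eval n p Z W = (\<Sum>i\<le>n. coeff p i * Z ^ i * W ^ (n - i))"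

definition hom_dZ :: "nat \<Rightarrow> 'a::field poly \<Rightarrow> 'a \<Rightarrow> 'a \<Rightarrow> 'a" where
  "hom_dZ n p Z W = (\<Sum>i\<le>n. of_nat i * coeff p i * Z ^ (i - 1) * W ^ (n - i))"

definition hom_dW :: "nat \<Rightarrow> 'a::field poly \<Rightarrow> 'a \<Rightarrow> 'a \<Rightarrow> 'a" where
  "hom_dW n p Z W = (\<Sum>i\<le>n. of_nat (n - i) * coeff p i * Z ^ i * W ^ (n - i - 1))"

text \<open>Smoothness (Jacobian criterion) of S : Y^2 = X^3 + F X + G in P(2,3,1,1),
  checked at points with coordinates in the ambient field.\<close>
definition dP1_smooth :: "'a::field poly \<Rightarrow> 'a poly \<Rightarrow> bool" where
  "dP1_smooth f g \<longleftrightarrow> \<not> (\<exists>X Y Z W. (X, Y, Z, W) \<noteq> (0, 0, 0, 0) \<and>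
      Y ^ 2 = X ^ 3 + hom_eval 4 f Z W * X + hom_eval 6 g Z W \<and>
      2 * Y = 0 \<and>
      3 * X ^ 2 + hom_eval 4 f Z W = 0 \<and>
      X * hom_dZ 4 f Z W + hom_dZ 6 g Z W = 0 \<and>
      X * hom_dW 4 f Z W + hom_dW 6 g Z W = 0)"

definition Ppoly :: "'a::field poly \<Rightarrow> 'a poly \<Rightarrow> 'a \<Rightarrow> 'a \<Rightarrow> 'a poly" where
  "Ppoly f g a b = - smult (1/4) (f ^ 2) + smult (1/6) ([:b, a:] ^ 4 * f)
      + [:b, a:] ^ 2 * g + smult (1/108) ([:b, a:] ^ 8)"

definition in_Fam :: "'a::field poly \<Rightarrow> 'a poly \<Rightarrow> 'a \<Rightarrow> 'a \<Rightarrow> 'a \<Rightarrow> bool" where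
  "in_Fam f g a b t0 \<longleftrightarrow> t0 \<noteq> 0 \<and> a * t0 + b \<noteq> 0 \<and>
     poly f t0 \<noteq> - ((a * t0 + b) ^ 4 / 3) \<and>
     Ppoly f g a b \<noteq> 0 \<and> order t0 (Ppoly f g a b) = 2"

definition Qpt :: "'a::field poly \<Rightarrow> 'a \<Rightarrow> 'a \<Rightarrow> 'a \<Rightarrow> 'a \<times> 'a \<times> 'a" where
  "Qpt f a b t0 = ((a * t0 + b) ^ 2 / 3,
                   (a * t0 + b) ^ 3 / 6 + poly f t0 / (2 * (a * t0 + b)), t0)"

definition onE :: "'a::field poly \<Rightarrow> 'a poly \<Rightarrow> 'a \<times> 'a \<times> 'a \<Rightarrow> bool" where
  "onE f g P = (case P of (x, y, t) \<Rightarrow> y ^ 2 = x ^ 3 + poly f t * x + poly g t)"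

definition onT :: "'a::field \<Rightarrow> 'a \<Rightarrow> 'a \<Rightarrow> 'a \<Rightarrow> 'a \<Rightarrow> 'a \<Rightarrow> 'a \<times> 'a \<times> 'a \<Rightarrow> bool" where
  "onT a b c d e \<gamma> P = (case P of (x, y, t) \<Rightarrow>
      y = a * x * t + b * x + c * t ^ 3 + d * t ^ 2 + e * t + \<gamma>)"

text \<open>T_gamma = E \<inter> {y = ...}; projecting to (x,t) it is the plane curve
  Phi(x,t) = (axt+bx+ct^3+dt^2+et+gamma)^2 - x^3 - f(t)x - g(t) = 0.
  T_gamma has (at least) a triple point at P = (xq,yq,tq) iff P lies on T_gamma and
  Phi vanishes to order >= 3 at (xq,tq): along every line (xq+su, tq+sv) the
  restriction of Phi is divisible by s^3.\<close>
definition triple_point ::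
  "'a::field poly \<Rightarrow> 'a poly \<Rightarrow> 'a \<Rightarrow> 'a \<Rightarrow> 'a \<Rightarrow> 'a \<Rightarrow> 'a \<Rightarrow> 'a \<Rightarrow> 'a \<times> 'a \<times> 'a \<Rightarrow> bool" where
  "triple_point f g a b c d e \<gamma> P = (case P of (xq, yq, tq) \<Rightarrow>
      onE f g P \<and> onT a b c d e \<gamma> P \<and>
      (\<forall>u v. let X = [:xq, u:]; T = [:tq, v:] in
         monom 1 3 dvd
           ((smult a (X * T) + smult b X + smult c (T ^ 3) + smult d (T ^ 2)
              + smult e T + [:\<gamma>:]) ^ 2 - X ^ 3 - pcompose f T * X - pcompose g T)))"

end

theory Submission
  imports Defs
begin

text \<open>On the fibre \<open>t = t\<^sub>R\<close> the trisection is cut out of the plane cubic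
  \<open>y\<^sup>2 = x\<^sup>3 + f(t\<^sub>R) x + g(t\<^sub>R)\<close> by the line that the equation of
  \<open>\<T>\<^sub>R\<close> becomes at \<open>t = t\<^sub>R\<close>, so the \<open>x\<close>-coordinates of its points are roots
  of a monic cubic. There are at most three of them and \<open>R\<close> is one.\<close>

lemma line_inter_cubic_roots:
  fixes m h A B :: "'a::idom"
  shows "finite {x. (m * x + h) ^ 2 = x ^ 3 + A * x + B}"
    and "card {x. (m * x + h) ^ 2 = x ^ 3 + A * x + B} \<le> 3"
proof -
  define q where "q = [:B - h ^ 2, A - 2 * m * h, - (m ^ 2), 1:]"
  have poly_q: "poly q x = x ^ 3 + A * x + B - (m * x + h) ^ 2" for x
    unfolding q_def by (simp add: algebra_simps power2_eq_square power3_eq_cube)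
  have roots: "{x. (m * x + h) ^ 2 = x ^ 3 + A * x + B} = {x. poly q x = 0}"
    by (auto simp: poly_q)
  have "q \<noteq> 0" and "degree q = 3"
    unfolding q_def by simp_all
  then show "finite {x. (m * x + h) ^ 2 = x ^ 3 + A * x + B}"
    and "card {x. (m * x + h) ^ 2 = x ^ 3 + A * x + B} \<le> 3"
    unfolding roots using poly_roots_finite card_poly_roots_bound by metis+
qed

lemma onE_onT_fibre_eq:
  "{P. onE f g P \<and> onT a b c d e \<gamma> P \<and> snd (snd P) = t} =
   (\<lambda>x. (x, (a * t + b) * x + (c * t ^ 3 + d * t ^ 2 + e * t + \<gamma>), t)) `
     {x. ((a * t + b) * x + (c * t ^ 3 + d * t ^ 2 + e * t + \<gamma>)) ^ 2
           = x ^ 3 + poly f t * x + poly g t}"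
  (is "?fibre = ?image")
proof (rule set_eqI)
  fix P :: "'a \<times> 'a \<times> 'a"
  show "P \<in> ?fibre \<longleftrightarrow> P \<in> ?image"
    by (cases P) (auto simp: onE_def onT_def algebra_simps)
qed

lemma onE_onT_fibre_finite_card:
  fixes f g :: "'a::field poly"
  shows "finite {P. onE f g P \<and> onT a b c d e \<gamma> P \<and> snd (snd P) = t}"
    and "card {P. onE f g P \<and> onT a b c d e \<gamma> P \<and> snd (snd P) = t} \<le> 3"
  unfolding onE_onT_fibre_eq
  by (rule finite_imageI[OF line_inter_cubic_roots(1)])
    (rule le_trans[OF card_image_le[OF line_inter_cubic_roots(1)] line_inter_cubic_roots(2)])

theorem lemma3p9:
  fixes k :: "'a::field_char_0 set"
    and f g :: "'a poly"
    and a b t0 c d e \<gamma> xR yR tR :: 'a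
  assumes "is_subfield k"
    and "\<forall>i. coeff f i \<in> k" and "\<forall>i. coeff g i \<in> k"
    and "degree f \<le> 4" and "degree g \<le> 6"
    and "dP1_smooth f g"
    and "in_Fam f g a b t0"
    and "triple_point f g a b c d e \<gamma> (Qpt f a b t0)"
    and "onE f g (xR, yR, tR)" and "tR \<noteq> t0"
    and "onT a b c d e \<gamma> (xR, yR, tR)"
  shows "finite {P. onE f g P \<and> onT a b c d e \<gamma> P \<and> P \<noteq> (xR, yR, tR) \<and> snd (snd P) = tR}
       \<and> card {P. onE f g P \<and> onT a b c d e \<gamma> P \<and> P \<noteq> (xR, yR, tR) \<and> snd (snd P) = tR} \<le> 2"
proof -
  define F where "F = {P. onE f g P \<and> onT a b c d e \<gamma> P \<and> snd (snd P) = tR}"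
  have "finite F" and "card F \<le> 3"
    unfolding F_def by (rule onE_onT_fibre_finite_card)+
  moreover have "(xR, yR, tR) \<in> F"
    unfolding F_def using assms(9,11) by simp
  moreover have "{P. onE f g P \<and> onT a b c d e \<gamma> P \<and> P \<noteq> (xR, yR, tR) \<and> snd (snd P) = tR}
      = F - {(xR, yR, tR)}"
    unfolding F_def by blast
  ultimately show ?thesis
    by (simp add: card_Diff_singleton)
qed

end
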